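(* Let $A=\mathbb{C}[x][y;\alpha,\delta]$ be an Ore extension of the polynomial ring $\mathbb{C}[x]$, where $\alpha$ is an automorphism of $\mathbb{C}[x]$ and $\delta$ is an $\alpha$-derivation, such that the center of the division ring of fractions $Q(A)$ is $\mathbb{C}$. Then $A$ is $LD$-stable with $LD\,A=2$ if and only if $\alpha$ is locally algebraic, i.e. every $t\in\mathbb{C}[x]$ is contained in a finite-dimensional $\alpha$-stable subspace.
   Context: $GK$ is Gelfand–Kirillov dimension over $\mathbb{C}$: $GK\,R=\sup_V\limsup_m\log(\dim V^m)/\log m$ over subframes $V$ (finite-dimensional subspaces containing $1$). Lower transcendence degree $LD$: if every subframe $V$ admits a finite-dimensional nonzero $W$ with $\dim VW=\dim W$, then $LD\,R=0$; otherwise $LD\,R=\sup_V\sup\{d>0:\exists c>0,\ \dim VW\ge\dim W+c(\dim W)^{(d-1)/d}\text{ for all finite-dimensional }W\neq0\}$. $R$ is $LD$-stable if $LD\,R=GK\,R$. *)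

theory Defs
  imports Complex_Main "HOL-Computational_Algebra.Polynomial"
    "HOL-Library.Extended_Real" "HOL-Library.Liminf_Limsup"
begin

definition complex_algebra :: "(complex \<Rightarrow> 'r::ring_1 \<Rightarrow> 'r) \<Rightarrow> bool" where
  "complex_algebra scale \<longleftrightarrow> vector_space scale \<and>
     (\<forall>c a b. scale c (a * b) = scale c a * b \<and> scale c (a * b) = a * scale c b)"

definition fd_subspace :: "(complex \<Rightarrow> 'r::ring_1 \<Rightarrow> 'r) \<Rightarrow> 'r set \<Rightarrow> bool" where
  "fd_subspace scale W \<longleftrightarrow> module.subspace scale W \<and>
     (\<exists>B. finite B \<and> W = module.span scale B)"

definition subframe :: "(complex \<Rightarrow> 'r::ring_1 \<Rightarrow> 'r) \<Rightarrow> 'r set \<Rightarrow> bool" where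
  "subframe scale V \<longleftrightarrow> fd_subspace scale V \<and> 1 \<in> V"

definition sprod :: "(complex \<Rightarrow> 'r::ring_1 \<Rightarrow> 'r) \<Rightarrow> 'r set \<Rightarrow> 'r set \<Rightarrow> 'r set" where
  "sprod scale V W = module.span scale {v * w | v w. v \<in> V \<and> w \<in> W}"

primrec spow :: "(complex \<Rightarrow> 'r::ring_1 \<Rightarrow> 'r) \<Rightarrow> 'r set \<Rightarrow> nat \<Rightarrow> 'r set" where
  "spow scale V 0 = module.span scale {1}"
| "spow scale V (Suc m) = sprod scale V (spow scale V m)"

abbreviation sdim :: "(complex \<Rightarrow> 'r::ring_1 \<Rightarrow> 'r) \<Rightarrow> 'r set \<Rightarrow> nat" where
  "sdim scale W \<equiv> vector_space.dim scale W"

definition GKdim :: "(complex \<Rightarrow> 'r::ring_1 \<Rightarrow> 'r) \<Rightarrow> ereal" where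
  "GKdim scale = (SUP V \<in> {V. subframe scale V}.
      limsup (\<lambda>m. ereal (ln (real (sdim scale (spow scale V m))) / ln (real m))))"

definition LDdim :: "(complex \<Rightarrow> 'r::ring_1 \<Rightarrow> 'r) \<Rightarrow> ereal" where
  "LDdim scale =
    (if (\<forall>V. subframe scale V \<longrightarrow>
            (\<exists>W. fd_subspace scale W \<and> W \<noteq> {0} \<and>
                 sdim scale (sprod scale V W) = sdim scale W))
     then 0
     else Sup {ereal d | d. d > 0 \<and> (\<exists>V. subframe scale V \<and>
            (\<exists>c>0. \<forall>W. fd_subspace scale W \<and> W \<noteq> {0} \<longrightarrow>
               real (sdim scale (sprod scale V W)) \<ge>
                 real (sdim scale W) + c * real (sdim scale W) powr ((d - 1) / d)))})"

definition LD_stable :: "(complex \<Rightarrow> 'r::ring_1 \<Rightarrow> 'r) \<Rightarrow> bool" where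
  "LD_stable scale \<longleftrightarrow> LDdim scale = GKdim scale"

definition poly_alg_aut :: "(complex poly \<Rightarrow> complex poly) \<Rightarrow> bool" where
  "poly_alg_aut \<alpha> \<longleftrightarrow> bij \<alpha> \<and> \<alpha> 1 = 1 \<and>
     (\<forall>p q. \<alpha> (p + q) = \<alpha> p + \<alpha> q \<and> \<alpha> (p * q) = \<alpha> p * \<alpha> q) \<and>
     (\<forall>c p. \<alpha> (smult c p) = smult c (\<alpha> p))"

text \<open>complex-linear alpha-derivation (convention y p = alpha(p) y + delta(p))\<close>
definition alpha_derivation ::
    "(complex poly \<Rightarrow> complex poly) \<Rightarrow> (complex poly \<Rightarrow> complex poly) \<Rightarrow> bool" where
  "alpha_derivation \<alpha> \<delta> \<longleftrightarrow>
     (\<forall>p q. \<delta> (p + q) = \<delta> p + \<delta> q \<and> \<delta> (p * q) = \<alpha> p * \<delta> q + \<delta> p * q) \<and>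
     (\<forall>c p. \<delta> (smult c p) = smult c (\<delta> p))"

definition poly_emb :: "(complex \<Rightarrow> 'r::ring_1 \<Rightarrow> 'r) \<Rightarrow> 'r \<Rightarrow> complex poly \<Rightarrow> 'r" where
  "poly_emb scale x p = (\<Sum>i\<le>degree p. scale (coeff p i) (x ^ i))"

definition is_ore_extension ::
    "(complex \<Rightarrow> 'r::ring_1 \<Rightarrow> 'r) \<Rightarrow> 'r \<Rightarrow> 'r \<Rightarrow>
     (complex poly \<Rightarrow> complex poly) \<Rightarrow> (complex poly \<Rightarrow> complex poly) \<Rightarrow> bool" where
  "is_ore_extension scale x y \<alpha> \<delta> \<longleftrightarrow>
     complex_algebra scale \<and>
     inj (\<lambda>(i::nat, j::nat). x ^ i * y ^ j) \<and>
     module.independent scale (range (\<lambda>(i::nat, j::nat). x ^ i * y ^ j)) \<and>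
     module.span scale (range (\<lambda>(i::nat, j::nat). x ^ i * y ^ j)) = UNIV \<and>
     (\<forall>p. y * poly_emb scale x p = poly_emb scale x (\<alpha> p) * y + poly_emb scale x (\<delta> p))"

definition is_division_ring_of_fractions :: "('r::ring_1 \<Rightarrow> 'q::division_ring) \<Rightarrow> bool" where
  "is_division_ring_of_fractions \<iota> \<longleftrightarrow> inj \<iota> \<and> \<iota> 1 = 1 \<and>
     (\<forall>a b. \<iota> (a + b) = \<iota> a + \<iota> b \<and> \<iota> (a * b) = \<iota> a * \<iota> b) \<and>
     (\<forall>q. \<exists>a b. b \<noteq> 0 \<and> q = \<iota> a * inverse (\<iota> b))"

definition ring_center :: "'q::ring \<Rightarrow> bool" where
  "ring_center z \<longleftrightarrow> (\<forall>w. z * w = w * z)"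

definition locally_algebraic :: "(complex poly \<Rightarrow> complex poly) \<Rightarrow> bool" where
  "locally_algebraic \<alpha> \<longleftrightarrow>
     (\<forall>t. \<exists>S. module.subspace (smult :: complex \<Rightarrow> complex poly \<Rightarrow> complex poly) S \<and>
            (\<exists>B. finite B \<and> S = module.span smult B) \<and> \<alpha> ` S \<subseteq> S \<and> t \<in> S)"

end

theory Submission
  imports Defs "HOL-Library.Product_Lexorder"
begin

text \<open>Every automorphism of C[x] is affine, so it preserves degrees and \<open>\<alpha>\<close> is always locally
  algebraic.

  Order the monomials x^i y^j lexicographically by (j, i). Since
  y x^i = \<alpha>(x)^i y + \<delta>(x^i), left multiplication by x and by y shifts leading
  monomials by (0, 1) and (1, 0), and the dimension of a finite-dimensional subspace W is the number
  of leading monomials of its elements. For V = span {1, x, y} the leading monomials of VW therefore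
  contain S, S + (0, 1) and S + (1, 0), where S is the set of leading monomials of W, and this union
  has at least |S| + sqrt |S| elements. This isoperimetric inequality gives LD A \<ge> 2 and, iterated,
  dim V^m \<ge> (\<kappa> m)^2, so GK A \<ge> 2. Conversely, a weight filtration with finite-dimensional
  pieces of quadratic growth gives dim V^m = O(m^2) for every subframe V, hence GK A \<le> 2, and an
  isoperimetric inequality with exponent d would force dim V^m \<ge> (\<kappa> m)^d, hence LD A \<le> 2.\<close>

section \<open>Automorphisms of C[x]\<close>

lemma poly_alg_aut_pcompose:
  assumes "poly_alg_aut \<alpha>"
  shows "\<alpha> p = pcompose p (\<alpha> [:0, 1:])"
proof (induction p)
  case 0
  have "\<alpha> 0 = \<alpha> 0 + \<alpha> 0"
    using assms unfolding poly_alg_aut_def by (metis add_0)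
  then show ?case by simp
next
  case (pCons a p)
  have const: "\<alpha> [:a:] = [:a:]"
    using assms unfolding poly_alg_aut_def by (metis smult_one)
  have "pCons a p = [:a:] + [:0, 1:] * p" by simp
  then have "\<alpha> (pCons a p) = [:a:] + \<alpha> [:0, 1:] * \<alpha> p"
    using assms const unfolding poly_alg_aut_def by metis
  then show ?case using pCons.IH by (simp add: pcompose_pCons)
qed

lemma degree_poly_alg_aut:
  assumes "poly_alg_aut \<alpha>"
  shows "degree (\<alpha> p) = degree p"
proof -
  obtain q where "\<alpha> q = [:0, 1:]"
    using assms unfolding poly_alg_aut_def by (metis bij_pointE)
  then have "degree (pcompose q (\<alpha> [:0, 1:])) = 1"
    using poly_alg_aut_pcompose[OF assms, of q] by simp
  then have "degree q * degree (\<alpha> [:0, 1:]) = 1"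
    by (simp add: degree_pcompose)
  then have "degree (\<alpha> [:0, 1:]) = 1" by simp
  then show ?thesis
    using poly_alg_aut_pcompose[OF assms, of p] by (simp add: degree_pcompose)
qed

interpretation poly_module: module "smult :: complex \<Rightarrow> complex poly \<Rightarrow> complex poly"
  by standard (simp_all add: smult_add_right smult_add_left)

lemma locally_algebraic_if_degree_le:
  assumes "\<And>p. degree (\<alpha> p) \<le> degree p"
  shows "locally_algebraic \<alpha>"
  unfolding locally_algebraic_def
proof
  fix t :: "complex poly"
  define S where "S = {p :: complex poly. degree p \<le> degree t}"
  define B where "B = (\<lambda>i. monom (1::complex) i) ` {..degree t}"
  have subspace: "poly_module.subspace S"
    unfolding poly_module.subspace_def S_def
    by (auto intro: order_trans[OF degree_add_le] order_trans[OF degree_smult_le])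
  have "S = poly_module.span B"
  proof
    show "poly_module.span B \<subseteq> S"
      by (rule poly_module.span_minimal[OF _ subspace]) (auto simp: B_def S_def degree_monom_eq)
    show "S \<subseteq> poly_module.span B"
    proof
      fix p assume "p \<in> S"
      then have "p = (\<Sum>i\<le>degree t. smult (coeff p i) (monom 1 i))"
        using poly_as_sum_of_monoms'[of p "degree t"] by (simp add: S_def smult_monom)
      also have "\<dots> \<in> poly_module.span B"
        by (intro poly_module.span_sum poly_module.span_scale poly_module.span_base)
          (auto simp: B_def)
      finally show "p \<in> poly_module.span B" .
    qed
  qed
  moreover have "\<alpha> ` S \<subseteq> S" "t \<in> S"
    using assms order_trans unfolding S_def by auto
  ultimately show "\<exists>S. poly_module.subspace S \<and> (\<exists>B. finite B \<and> S = poly_module.span B) \<and>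
      \<alpha> ` S \<subseteq> S \<and> t \<in> S"
    using subspace unfolding B_def by blast
qed

section \<open>Growth of real sequences\<close>

lemma powr_increment_le:
  fixes a \<kappa> c d :: real
  assumes "0 < \<kappa>" "\<kappa> \<le> a" "1 \<le> d" and small: "\<kappa> * d * 2 powr (d - 1) \<le> c"
  shows "(a + \<kappa>) powr d \<le> a powr d + c * a powr (d - 1)"
proof -
  have "a > 0" using assms by simp
  have "\<exists>z. a < z \<and> z < a + \<kappa> \<and>
      (a + \<kappa>) powr d - a powr d = (a + \<kappa> - a) * (d * z powr (d - 1))"
    by (rule MVT2) (use \<open>a > 0\<close> \<open>0 < \<kappa>\<close> in \<open>auto intro!: has_real_derivative_powr\<close>)
  then obtain z where z: "a < z" "z < a + \<kappa>"
    and mvt: "(a + \<kappa>) powr d - a powr d = \<kappa> * (d * z powr (d - 1))"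
    by auto
  have "z powr (d - 1) \<le> (2 * a) powr (d - 1)"
    using z assms \<open>a > 0\<close> by (intro powr_mono2) auto
  then have "\<kappa> * (d * z powr (d - 1)) \<le> \<kappa> * (d * (2 * a) powr (d - 1))"
    using assms by (intro mult_left_mono) auto
  also have "\<dots> = \<kappa> * d * 2 powr (d - 1) * a powr (d - 1)"
    using \<open>a > 0\<close> by (simp add: powr_mult)
  also have "\<dots> \<le> c * a powr (d - 1)"
    using small by (intro mult_right_mono) auto
  finally show ?thesis using mvt by simp
qed

lemma powr_lower_bound_if_increments_ge:
  fixes f :: "nat \<Rightarrow> real" and c d :: real
  assumes "c > 0" "d \<ge> 1" "f 0 \<ge> 1"
    and step: "\<And>m. f (Suc m) \<ge> f m + c * f m powr ((d - 1) / d)"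
  shows "\<exists>\<kappa>>0. \<forall>m. (\<kappa> * real m) powr d \<le> f m"
proof -
  have f_ge_1: "f m \<ge> 1" for m
  proof (induction m)
    case (Suc m)
    have "0 \<le> c * f m powr ((d - 1) / d)" using \<open>c > 0\<close> by simp
    then show ?case using step[of m] Suc.IH by linarith
  qed (use assms in simp)
  define \<kappa> where "\<kappa> = min 1 (c / (d * 2 powr (d - 1)))"
  have "\<kappa> > 0" "\<kappa> \<le> 1" unfolding \<kappa>_def using assms by auto
  have small: "\<kappa> * d * 2 powr (d - 1) \<le> c"
    using assms unfolding \<kappa>_def by (simp add: min_def field_simps)
  have "(\<kappa> * real m) powr d \<le> f m" for m
  proof (induction m)
    case 0
    then show ?case using f_ge_1[of 0] by simp
  next
    case (Suc m)
    show ?case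
    proof (cases "m = 0")
      case True
      have "\<kappa> powr d \<le> 1" using \<open>\<kappa> > 0\<close> \<open>\<kappa> \<le> 1\<close> assms by (intro powr_le1) auto
      then show ?thesis using True f_ge_1[of 1] by simp
    next
      case False
      define a where "a = \<kappa> * real m"
      have "\<kappa> \<le> a" "a > 0" using False \<open>\<kappa> > 0\<close> unfolding a_def by auto
      have exponent: "(a powr d) powr ((d - 1) / d) = a powr (d - 1)"
        using assms by (simp add: powr_powr)
      have "(a powr d) powr ((d - 1) / d) \<le> f m powr ((d - 1) / d)"
        using Suc.IH assms unfolding a_def by (intro powr_mono2) auto
      then have "a powr d + c * (a powr d) powr ((d - 1) / d) \<le> f m + c * f m powr ((d - 1) / d)"
        using Suc.IH \<open>c > 0\<close> unfolding a_def by (intro add_mono mult_left_mono) auto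
      then have "a powr d + c * a powr (d - 1) \<le> f (Suc m)"
        using step[of m] unfolding exponent by linarith
      moreover have "(a + \<kappa>) powr d \<le> a powr d + c * a powr (d - 1)"
        using powr_increment_le[OF \<open>\<kappa> > 0\<close> \<open>\<kappa> \<le> a\<close> \<open>d \<ge> 1\<close> small] .
      moreover have "a + \<kappa> = \<kappa> * real (Suc m)" unfolding a_def by (simp add: algebra_simps)
      ultimately show ?thesis by simp
    qed
  qed
  then show ?thesis using \<open>\<kappa> > 0\<close> by blast
qed

lemma exponent_le_if_powr_bounded:
  fixes \<kappa> A d e :: real
  assumes "\<kappa> > 0" and bound: "\<And>m::nat. m \<ge> 1 \<Longrightarrow> (\<kappa> * real m) powr d \<le> A * real m powr e"
  shows "d \<le> e"
proof (rule ccontr)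
  assume "\<not> d \<le> e"
  define B where "B = (\<bar>A\<bar> + 1) / \<kappa> powr d"
  define m where "m = nat \<lceil>B powr (1 / (d - e))\<rceil> + 1"
  have "m \<ge> 1" "B > 0" unfolding m_def B_def using \<open>\<kappa> > 0\<close> by auto
  have "B powr (1 / (d - e)) \<le> real m" unfolding m_def by linarith
  then have "B \<le> real m powr (d - e)"
    using \<open>\<not> d \<le> e\<close> \<open>B > 0\<close> powr_mono2[of "d - e" "B powr (1 / (d - e))" "real m"]
    by (simp add: powr_powr)
  then have "\<bar>A\<bar> + 1 \<le> \<kappa> powr d * real m powr (d - e)"
    using \<open>\<kappa> > 0\<close> unfolding B_def by (simp add: field_simps)
  then have "(\<bar>A\<bar> + 1) * real m powr e \<le> \<kappa> powr d * real m powr (d - e) * real m powr e"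
    by (intro mult_right_mono) auto
  also have "\<dots> = (\<kappa> * real m) powr d"
    using \<open>\<kappa> > 0\<close> by (simp add: powr_mult mult.assoc flip: powr_add)
  finally have "(\<bar>A\<bar> + 1) * real m powr e \<le> (\<kappa> * real m) powr d" .
  moreover have "A * real m powr e < (\<bar>A\<bar> + 1) * real m powr e"
    using \<open>m \<ge> 1\<close> by (intro mult_strict_right_mono) auto
  ultimately have "A * real m powr e < (\<kappa> * real m) powr d" by linarith
  then show False using bound[OF \<open>m \<ge> 1\<close>] by simp
qed

lemma tendsto_const_add_div_ln:
  "((\<lambda>m::nat. ereal (d + C / ln (real m))) \<longlongrightarrow> ereal d) sequentially"
proof -
  have "filterlim (\<lambda>m::nat. ln (real m)) at_top sequentially"
    by (rule filterlim_compose[OF ln_at_top filterlim_real_sequentially])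
  then have "((\<lambda>m::nat. C / ln (real m)) \<longlongrightarrow> 0) sequentially"
    by (intro tendsto_divide_0[OF tendsto_const] filterlim_at_top_imp_at_infinity)
  then have "((\<lambda>m::nat. d + C / ln (real m)) \<longlongrightarrow> d + 0) sequentially"
    by (intro tendsto_add tendsto_const)
  then show ?thesis by (simp add: lim_ereal)
qed

lemma limsup_ln_ratio_le:
  fixes f :: "nat \<Rightarrow> real"
  assumes "A > 0" and pos: "\<And>m. f m > 0" and bound: "\<And>m. m \<ge> 1 \<Longrightarrow> f m \<le> A * real m powr d"
  shows "limsup (\<lambda>m. ereal (ln (f m) / ln (real m))) \<le> d"
proof -
  have "\<forall>\<^sub>F m in sequentially. ereal (ln (f m) / ln (real m)) \<le> ereal (d + ln A / ln (real m))"
    using eventually_ge_at_top[of 2]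
  proof eventually_elim
    case (elim m)
    then have "ln (real m) > 0" by simp
    have "ln (f m) \<le> ln (A * real m powr d)"
      using pos[of m] bound[of m] elim by simp
    also have "\<dots> = ln A + d * ln (real m)"
      using \<open>A > 0\<close> elim by (simp add: ln_mult ln_powr)
    finally have "ln (f m) / ln (real m) \<le> (ln A + d * ln (real m)) / ln (real m)"
      using \<open>ln (real m) > 0\<close> by (intro divide_right_mono) auto
    also have "\<dots> = d + ln A / ln (real m)"
      using \<open>ln (real m) > 0\<close> by (simp add: field_simps)
    finally show ?case by simp
  qed
  then have "limsup (\<lambda>m. ereal (ln (f m) / ln (real m)))
      \<le> limsup (\<lambda>m. ereal (d + ln A / ln (real m)))"
    by (rule Limsup_mono)
  also have "\<dots> = d"
    using lim_imp_Limsup[OF _ tendsto_const_add_div_ln] by simp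
  finally show ?thesis .
qed

lemma limsup_ln_ratio_ge:
  fixes f :: "nat \<Rightarrow> real"
  assumes "\<kappa> > 0" and bound: "\<And>m. (\<kappa> * real m) powr d \<le> f m"
  shows "d \<le> limsup (\<lambda>m. ereal (ln (f m) / ln (real m)))"
proof -
  have "\<forall>\<^sub>F m in sequentially. ereal (d + d * ln \<kappa> / ln (real m)) \<le> ereal (ln (f m) / ln (real m))"
    using eventually_ge_at_top[of 2]
  proof eventually_elim
    case (elim m)
    then have "ln (real m) > 0" "\<kappa> * real m > 0" using \<open>\<kappa> > 0\<close> by auto
    have "d * ln \<kappa> + d * ln (real m) = ln ((\<kappa> * real m) powr d)"
      using \<open>\<kappa> * real m > 0\<close> \<open>\<kappa> > 0\<close> elim by (simp add: ln_powr ln_mult algebra_simps)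
    also have "\<dots> \<le> ln (f m)"
      using bound[of m] \<open>\<kappa> * real m > 0\<close> elim by (intro ln_mono) auto
    finally have "(d * ln \<kappa> + d * ln (real m)) / ln (real m) \<le> ln (f m) / ln (real m)"
      using \<open>ln (real m) > 0\<close> by (intro divide_right_mono) auto
    moreover have "(d * ln \<kappa> + d * ln (real m)) / ln (real m) = d + d * ln \<kappa> / ln (real m)"
      using \<open>ln (real m) > 0\<close> by (simp add: field_simps)
    ultimately show ?case by simp
  qed
  then have "limsup (\<lambda>m. ereal (d + d * ln \<kappa> / ln (real m)))
      \<le> limsup (\<lambda>m. ereal (ln (f m) / ln (real m)))"
    by (rule Limsup_mono)
  moreover have "limsup (\<lambda>m. ereal (d + d * ln \<kappa> / ln (real m))) = d"
    using lim_imp_Limsup[OF _ tendsto_const_add_div_ln] by simp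
  ultimately show ?thesis by simp
qed

section \<open>Growth of subframes and the dimensions GK and LD\<close>

definition isoperimetric :: "(complex \<Rightarrow> 'r::ring_1 \<Rightarrow> 'r) \<Rightarrow> 'r set \<Rightarrow> real \<Rightarrow> real \<Rightarrow> bool" where
  "isoperimetric scale V c d \<longleftrightarrow> (\<forall>W. fd_subspace scale W \<and> W \<noteq> {0} \<longrightarrow>
     real (sdim scale (sprod scale V W))
       \<ge> real (sdim scale W) + c * real (sdim scale W) powr ((d - 1) / d))"

lemma LDdim_eq:
  "LDdim scale =
    (if \<forall>V. subframe scale V \<longrightarrow>
          (\<exists>W. fd_subspace scale W \<and> W \<noteq> {0} \<and> sdim scale (sprod scale V W) = sdim scale W)
     then 0
     else Sup {ereal d | d. d > 0 \<and> (\<exists>V. subframe scale V \<and> (\<exists>c>0. isoperimetric scale V c d))})"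
  unfolding LDdim_def isoperimetric_def ..

locale complex_alg = vector_space scale
  for scale :: "complex \<Rightarrow> 'r::ring_1 \<Rightarrow> 'r" +
  assumes scale_mult_left: "scale c (a * b) = scale c a * b"
    and scale_mult_right: "scale c (a * b) = a * scale c b"
begin

lemma mult_left_in_span: "a \<in> span S \<Longrightarrow> c * a \<in> span ((\<lambda>s. c * s) ` S)"
proof (induction a rule: span_induct_alt)
  case base
  then show ?case by (simp add: span_zero)
next
  case (step k s z)
  have "c * (scale k s + z) = scale k (c * s) + c * z"
    by (simp add: distrib_left scale_mult_right)
  then show ?case using step by (simp add: span_add span_scale span_base)
qed

lemma mult_right_in_span: "a \<in> span S \<Longrightarrow> a * c \<in> span ((\<lambda>s. s * c) ` S)"
proof (induction a rule: span_induct_alt)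
  case base
  then show ?case by (simp add: span_zero)
next
  case (step k s z)
  have "(scale k s + z) * c = scale k (s * c) + z * c"
    by (simp add: distrib_right scale_mult_left)
  then show ?case using step by (simp add: span_add span_scale span_base)
qed

lemma mult_in_sprod: "v \<in> V \<Longrightarrow> w \<in> W \<Longrightarrow> v * w \<in> sprod scale V W"
  unfolding sprod_def by (rule span_base) blast

lemma subspace_sprod: "subspace (sprod scale V W)"
  unfolding sprod_def by simp

lemma sprod_subset:
  "subspace U \<Longrightarrow> (\<And>v w. v \<in> V \<Longrightarrow> w \<in> W \<Longrightarrow> v * w \<in> U) \<Longrightarrow> sprod scale V W \<subseteq> U"
  unfolding sprod_def by (rule span_minimal) auto

lemma sprod_span: "sprod scale (span B) (span C) = span ((\<lambda>(b, c). b * c) ` (B \<times> C))"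
proof
  let ?P = "(\<lambda>(b, c). b * c) ` (B \<times> C)"
  show "sprod scale (span B) (span C) \<subseteq> span ?P"
  proof (rule sprod_subset[OF subspace_span])
    fix v w assume v: "v \<in> span B" and w: "w \<in> span C"
    have "v * w \<in> span ((\<lambda>s. s * w) ` B)" by (rule mult_right_in_span[OF v])
    also have "\<dots> \<subseteq> span ?P"
    proof (rule span_minimal[OF _ subspace_span], safe)
      fix b assume "b \<in> B"
      have "b * w \<in> span ((\<lambda>s. b * s) ` C)" by (rule mult_left_in_span[OF w])
      also have "\<dots> \<subseteq> span ?P" using \<open>b \<in> B\<close> by (intro span_mono) auto
      finally show "b * w \<in> span ?P" .
    qed
    finally show "v * w \<in> span ?P" .
  qed
  show "span ?P \<subseteq> sprod scale (span B) (span C)"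
    by (rule span_minimal[OF _ subspace_sprod]) (auto intro!: mult_in_sprod span_base)
qed

lemma fd_subspace_sprod:
  assumes "fd_subspace scale V" "fd_subspace scale W"
  shows "fd_subspace scale (sprod scale V W)"
proof -
  obtain B C where "finite B" "V = span B" "finite C" "W = span C"
    using assms unfolding fd_subspace_def by blast
  then show ?thesis
    unfolding fd_subspace_def using sprod_span subspace_sprod by (metis finite_SigmaI finite_imageI)
qed

lemma fd_subspace_spow: "fd_subspace scale V \<Longrightarrow> fd_subspace scale (spow scale V m)"
proof (induction m)
  case 0
  then show ?case unfolding fd_subspace_def by (auto intro!: exI[of _ "{1}"])
next
  case (Suc m)
  then show ?case using fd_subspace_sprod by simp
qed

lemma one_in_spow: "1 \<in> V \<Longrightarrow> 1 \<in> spow scale V m"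
  by (induction m) (auto intro: span_base dest: mult_in_sprod[of 1 V 1])

lemma dim_ge_1_if_fd_subspace:
  assumes "fd_subspace scale W" "W \<noteq> {0}"
  shows "1 \<le> dim W"
proof (rule ccontr)
  assume "\<not> 1 \<le> dim W"
  obtain C where "finite C" "W = span C" "subspace W"
    using assms(1) unfolding fd_subspace_def by blast
  obtain B where B: "B \<subseteq> W" "independent B" "W \<subseteq> span B" "card B = dim W"
    by (rule basis_exists)
  have "finite B"
    using independent_span_bound[OF \<open>finite C\<close> B(2)] B(1) \<open>W = span C\<close> by blast
  moreover have "card B = 0" using B(4) \<open>\<not> 1 \<le> dim W\<close> by simp
  ultimately have "B = {}" by simp
  then have "W \<subseteq> {0}" using B(3) by simp
  then show False using assms(2) \<open>subspace W\<close> subspace_0 by blast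
qed

lemma dim_spow_ge_1:
  assumes "subframe scale V"
  shows "1 \<le> dim (spow scale V m)"
proof (rule dim_ge_1_if_fd_subspace)
  show "fd_subspace scale (spow scale V m)"
    using assms fd_subspace_spow unfolding subframe_def by blast
  show "spow scale V m \<noteq> {0}"
    using assms one_in_spow[of V m] unfolding subframe_def by auto
qed

lemma spow_growth_if_isoperimetric:
  assumes V: "subframe scale V" and "c > 0" "d \<ge> 1" and iso: "isoperimetric scale V c d"
  shows "\<exists>\<kappa>>0. \<forall>m. (\<kappa> * real m) powr d \<le> real (dim (spow scale V m))"
proof (rule powr_lower_bound_if_increments_ge[OF \<open>c > 0\<close> \<open>d \<ge> 1\<close>])
  show "1 \<le> real (dim (spow scale V 0))" using dim_spow_ge_1[OF V, of 0] by simp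
  fix m
  have "fd_subspace scale (spow scale V m)" "spow scale V m \<noteq> {0}"
    using V one_in_spow[of V m] fd_subspace_spow unfolding subframe_def by auto
  then show "real (dim (spow scale V m)) + c * real (dim (spow scale V m)) powr ((d - 1) / d)
      \<le> real (dim (spow scale V (Suc m)))"
    using iso unfolding isoperimetric_def by simp
qed

lemma GKdim_le:
  assumes growth: "\<And>V. subframe scale V \<Longrightarrow>
    \<exists>A>0. \<forall>m\<ge>1. real (dim (spow scale V m)) \<le> A * real m powr d"
  shows "GKdim scale \<le> d"
  unfolding GKdim_def
proof (rule SUP_least)
  fix V assume "V \<in> {V. subframe scale V}"
  then have V: "subframe scale V" by simp
  obtain A where "A > 0" "\<forall>m\<ge>1. real (dim (spow scale V m)) \<le> A * real m powr d"
    using growth[OF V] by blast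
  then show "limsup (\<lambda>m. ereal (ln (real (dim (spow scale V m))) / ln (real m))) \<le> d"
    using dim_spow_ge_1[OF V] by (intro limsup_ln_ratio_le[of A]) (auto intro: less_le_trans)
qed

lemma GKdim_ge:
  assumes V: "subframe scale V" and "\<kappa> > 0"
    and growth: "\<And>m. (\<kappa> * real m) powr d \<le> real (dim (spow scale V m))"
  shows "d \<le> GKdim scale"
proof -
  have "d \<le> limsup (\<lambda>m. ereal (ln (real (dim (spow scale V m))) / ln (real m)))"
    by (rule limsup_ln_ratio_ge[OF \<open>\<kappa> > 0\<close> growth])
  also have "\<dots> \<le> GKdim scale"
    unfolding GKdim_def using V by (intro SUP_upper) simp
  finally show ?thesis .
qed

lemma LDdim_ge:
  assumes V: "subframe scale V" and "c > 0" "d > 0" and iso: "isoperimetric scale V c d"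
  shows "d \<le> LDdim scale"
proof -
  let ?E = "{ereal d | d. d > 0 \<and> (\<exists>V. subframe scale V \<and> (\<exists>c>0. isoperimetric scale V c d))}"
  have growing: "dim W < dim (sprod scale V W)" if "fd_subspace scale W" "W \<noteq> {0}" for W
  proof -
    have "0 < c * real (dim W) powr ((d - 1) / d)"
      using dim_ge_1_if_fd_subspace[OF that] \<open>c > 0\<close> by simp
    moreover have "real (dim W) + c * real (dim W) powr ((d - 1) / d) \<le> real (dim (sprod scale V W))"
      using iso that unfolding isoperimetric_def by blast
    ultimately have "real (dim W) < real (dim (sprod scale V W))" by linarith
    then show ?thesis by simp
  qed
  have "\<not> (\<forall>V. subframe scale V \<longrightarrow>
      (\<exists>W. fd_subspace scale W \<and> W \<noteq> {0} \<and> dim (sprod scale V W) = dim W))"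
    using V growing by (metis less_irrefl)
  then have "LDdim scale = Sup ?E" unfolding LDdim_eq by (rule if_not_P)
  moreover have "ereal d \<le> Sup ?E" by (rule Sup_upper) (use assms in blast)
  ultimately show ?thesis by simp
qed

lemma LDdim_le:
  assumes "d \<ge> 1" and growth: "\<And>V. subframe scale V \<Longrightarrow>
    \<exists>A>0. \<forall>m\<ge>1. real (dim (spow scale V m)) \<le> A * real m powr d"
  shows "LDdim scale \<le> d"
proof -
  let ?E = "{ereal d | d. d > 0 \<and> (\<exists>V. subframe scale V \<and> (\<exists>c>0. isoperimetric scale V c d))}"
  have exponent_le: "e \<le> d" if V: "subframe scale V" and "c > 0" and iso: "isoperimetric scale V c e"
    for e V c
  proof (cases "e \<le> 1")
    case True
    then show ?thesis using \<open>d \<ge> 1\<close> by simp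
  next
    case False
    obtain \<kappa> where "\<kappa> > 0" "\<forall>m. (\<kappa> * real m) powr e \<le> real (dim (spow scale V m))"
      using spow_growth_if_isoperimetric[OF V \<open>c > 0\<close> _ iso] False by auto
    moreover obtain A where "\<forall>m\<ge>1. real (dim (spow scale V m)) \<le> A * real m powr d"
      using growth[OF V] by blast
    ultimately show ?thesis
      by (intro exponent_le_if_powr_bounded[of \<kappa> e A]) (auto intro: order_trans)
  qed
  have "Sup ?E \<le> d"
  proof (rule Sup_least)
    fix x assume "x \<in> ?E"
    then obtain e V c where "x = ereal e" "subframe scale V" "c > 0" "isoperimetric scale V c e"
      by blast
    then show "x \<le> d" using exponent_le by simp
  qed
  moreover have "(0::ereal) \<le> d" using \<open>d \<ge> 1\<close> by simp
  ultimately show ?thesis unfolding LDdim_eq by (simp only: split: if_split) blast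
qed

end

section \<open>An isoperimetric inequality on the grid\<close>

lemma card_add_card_fst_le_card_shift:
  fixes S :: "(nat \<times> nat) set"
  assumes "finite S"
  shows "card S + card (fst ` S) \<le> card (S \<union> (\<lambda>(j, i). (j, Suc i)) ` S)"
proof -
  define top where "top j = Max {i. (j, i) \<in> S}" for j
  define T where "T = (\<lambda>j. (j, Suc (top j))) ` fst ` S"
  have row_finite: "finite {i. (j, i) \<in> S}" for j
    using finite_subset[of "{i. (j, i) \<in> S}" "snd ` S"] assms by (force intro: rev_image_eqI)
  have "(j, top j) \<in> S" if "j \<in> fst ` S" for j
  proof -
    have "{i. (j, i) \<in> S} \<noteq> {}" using that by force
    then show ?thesis using Max_in[OF row_finite] unfolding top_def by blast
  qed
  then have "T \<subseteq> (\<lambda>(j, i). (j, Suc i)) ` S"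
    unfolding T_def by force
  then have "card (S \<union> T) \<le> card (S \<union> (\<lambda>(j, i). (j, Suc i)) ` S)"
    using assms by (intro card_mono) auto
  moreover have "(j, Suc (top j)) \<notin> S" for j
    using Max_ge[OF row_finite, of "Suc (top j)" j] unfolding top_def by auto
  then have "card (S \<union> T) = card S + card T"
    using assms unfolding T_def by (intro card_Un_disjoint) auto
  moreover have "card T = card (fst ` S)"
    unfolding T_def by (rule card_image) (auto simp: inj_on_def)
  ultimately show ?thesis by simp
qed

lemma card_add_card_snd_le_card_shift:
  fixes S :: "(nat \<times> nat) set"
  assumes "finite S"
  shows "card S + card (snd ` S) \<le> card (S \<union> (\<lambda>(j, i). (Suc j, i)) ` S)"
proof -
  have swap_shift: "prod.swap ` (S \<union> (\<lambda>(j, i). (Suc j, i)) ` S)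
      = prod.swap ` S \<union> (\<lambda>(j, i). (j, Suc i)) ` prod.swap ` S"
    unfolding image_Un image_image by (simp add: case_prod_beta)
  have "card (prod.swap ` S) + card (fst ` prod.swap ` S)
      \<le> card (prod.swap ` S \<union> (\<lambda>(j, i). (j, Suc i)) ` prod.swap ` S)"
    using assms by (intro card_add_card_fst_le_card_shift) simp
  then show ?thesis
    unfolding swap_shift[symmetric] by (simp add: card_image image_image)
qed

lemma card_add_sqrt_card_le_card_shifts:
  fixes S :: "(nat \<times> nat) set"
  assumes "finite S"
  shows "real (card S) + sqrt (real (card S))
    \<le> real (card (S \<union> (\<lambda>(j, i). (j, Suc i)) ` S \<union> (\<lambda>(j, i). (Suc j, i)) ` S))"
proof -
  let ?U = "S \<union> (\<lambda>(j, i). (j, Suc i)) ` S \<union> (\<lambda>(j, i). (Suc j, i)) ` S"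
  let ?M = "max (card (fst ` S)) (card (snd ` S))"
  have "card (S \<union> (\<lambda>(j, i). (j, Suc i)) ` S) \<le> card ?U"
    "card (S \<union> (\<lambda>(j, i). (Suc j, i)) ` S) \<le> card ?U"
    using assms by (intro card_mono; auto)+
  then have "card S + ?M \<le> card ?U"
    using card_add_card_fst_le_card_shift[OF assms] card_add_card_snd_le_card_shift[OF assms]
    by linarith
  have "card S \<le> card (fst ` S \<times> snd ` S)"
    using assms by (intro card_mono) (auto simp: rev_image_eqI)
  also have "\<dots> \<le> ?M * ?M"
    by (simp add: card_cartesian_product mult_mono)
  finally have "sqrt (real (card S)) \<le> sqrt (real ?M * real ?M)"
    by (intro real_sqrt_le_mono) (simp flip: of_nat_mult)
  then show ?thesis using \<open>card S + ?M \<le> card ?U\<close> by simp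
qed

section \<open>Ore extensions of C[x]\<close>

locale ore_extension = complex_alg scale
  for scale :: "complex \<Rightarrow> 'r::ring_1 \<Rightarrow> 'r" +
  fixes x y :: 'r and \<alpha> \<delta> :: "complex poly \<Rightarrow> complex poly"
  assumes inj_monomials: "inj (\<lambda>(i::nat, j::nat). x ^ i * y ^ j)"
    and independent_monomials: "independent (range (\<lambda>(i::nat, j::nat). x ^ i * y ^ j))"
    and span_monomials: "span (range (\<lambda>(i::nat, j::nat). x ^ i * y ^ j)) = UNIV"
    and y_mult_poly: "y * poly_emb scale x p = poly_emb scale x (\<alpha> p) * y + poly_emb scale x (\<delta> p)"
    and aut: "poly_alg_aut \<alpha>"
    and der: "alpha_derivation \<alpha> \<delta>"
begin

text \<open>The monomial x^i y^j is indexed by (j, i), so that the lexicographic order on pairs compares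
  y-degrees first: then left multiplication by y shifts leading monomials, since the
  \<open>\<delta>\<close>-part of y x^i has lower y-degree.\<close>

definition mon :: "nat \<times> nat \<Rightarrow> 'r" where "mon P = x ^ snd P * y ^ fst P"

definition lower :: "nat \<times> nat \<Rightarrow> 'r set" where "lower P = span (mon ` {Q. Q < P})"

definition has_lead_mon :: "'r \<Rightarrow> nat \<times> nat \<Rightarrow> bool" where
  "has_lead_mon a P \<longleftrightarrow> (\<exists>k b. k \<noteq> 0 \<and> b \<in> lower P \<and> a = scale k (mon P) + b)"

definition lead_mons :: "'r set \<Rightarrow> (nat \<times> nat) set" where
  "lead_mons W = {P. \<exists>a\<in>W. has_lead_mon a P}"

lemma range_mon: "range mon = range (\<lambda>(i::nat, j::nat). x ^ i * y ^ j)"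
  unfolding mon_def by (auto simp: image_iff) (metis fst_conv snd_conv)

lemma inj_mon: "inj mon"
  using inj_monomials unfolding mon_def inj_def by auto

lemma x_pow_mult_y_pow: "x ^ i * y ^ j = mon (j, i)"
  by (simp add: mon_def)

lemma lower_mono: "P \<le> Q \<Longrightarrow> lower P \<subseteq> lower Q"
  unfolding lower_def by (rule span_mono) auto

lemma mon_in_lower: "Q < P \<Longrightarrow> mon Q \<in> lower P"
  unfolding lower_def by (rule span_base) auto

lemma span_mon_subset_lower: "(\<And>Q. Q \<in> A \<Longrightarrow> Q < P) \<Longrightarrow> span (mon ` A) \<subseteq> lower P"
  unfolding lower_def by (intro span_mono) auto

lemma mon_notin_lower: "mon P \<notin> lower P"
proof
  assume "mon P \<in> lower P"
  moreover have "mon ` {Q. Q < P} \<subseteq> range mon - {mon P}"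
    using inj_mon by (auto simp: inj_eq)
  ultimately have "mon P \<in> span (range mon - {mon P})"
    unfolding lower_def using span_mono by blast
  then have "dependent (range mon)" unfolding dependent_def by blast
  then show False using independent_monomials range_mon by simp
qed

lemma has_lead_mon_notin_lower: "has_lead_mon a P \<Longrightarrow> a \<notin> lower P"
proof
  assume "has_lead_mon a P" "a \<in> lower P"
  then obtain k b where "k \<noteq> 0" "b \<in> lower P" "a = scale k (mon P) + b"
    unfolding has_lead_mon_def by blast
  then have "scale k (mon P) \<in> lower P"
    using \<open>a \<in> lower P\<close> unfolding lower_def by (metis add_diff_cancel_right' span_diff)
  then have "scale (inverse k) (scale k (mon P)) \<in> lower P"
    unfolding lower_def by (rule span_scale)
  then show False using \<open>k \<noteq> 0\<close> mon_notin_lower by simp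
qed

lemma has_lead_mon_in_lower: "has_lead_mon a P \<Longrightarrow> P < Q \<Longrightarrow> a \<in> lower Q"
proof -
  assume "has_lead_mon a P" "P < Q"
  then obtain k b where "b \<in> lower P" "a = scale k (mon P) + b"
    unfolding has_lead_mon_def by blast
  moreover have "lower P \<subseteq> lower Q" "mon P \<in> lower Q"
    using lower_mono mon_in_lower \<open>P < Q\<close> by auto
  ultimately show ?thesis unfolding lower_def by (auto intro: span_add span_scale)
qed

lemma has_lead_mon_unique: "has_lead_mon a P \<Longrightarrow> has_lead_mon a Q \<Longrightarrow> P = Q"
  by (metis has_lead_mon_in_lower has_lead_mon_notin_lower linorder_neqE)

lemma lead_mon_less_if_in_lower: "a \<in> lower P \<Longrightarrow> has_lead_mon a Q \<Longrightarrow> Q < P"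
  by (metis lower_mono has_lead_mon_notin_lower not_le subsetD)

lemma in_span_finite_mons: "\<exists>S. finite S \<and> a \<in> span (mon ` S)"
proof -
  have "a \<in> span (range mon)" using span_monomials range_mon by simp
  then obtain t r where "finite t" "t \<subseteq> range mon" "a = (\<Sum>v\<in>t. scale (r v) v)"
    unfolding span_explicit by blast
  moreover obtain S where "finite S" "t = mon ` S"
    using \<open>finite t\<close> \<open>t \<subseteq> range mon\<close> by (meson finite_subset_image)
  ultimately show ?thesis
    by (intro exI[of _ S]) (auto intro!: span_sum span_scale intro: span_base)
qed

lemma has_lead_mon_if_in_span_mons:
  "finite S \<Longrightarrow> a \<in> span (mon ` S) \<Longrightarrow> a = 0 \<or> (\<exists>P. has_lead_mon a P)"
proof (induction S arbitrary: a rule: finite_linorder_max_induct)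
  case empty
  then show ?case by simp
next
  case (insert P S)
  then obtain k where k: "a - scale k (mon P) \<in> span (mon ` S)"
    using span_breakdown_eq by auto
  show ?case
  proof (cases "k = 0")
    case True
    then have "a \<in> span (mon ` S)" using k by simp
    then show ?thesis by (rule insert.IH)
  next
    case False
    have "span (mon ` S) \<subseteq> lower P"
      using insert.hyps(2) by (intro span_mon_subset_lower) auto
    then have "has_lead_mon a P"
      unfolding has_lead_mon_def using k False
      by (intro exI[of _ k] exI[of _ "a - scale k (mon P)"]) (simp add: subset_iff)
    then show ?thesis by blast
  qed
qed

lemma has_lead_mon_exists: "a \<noteq> 0 \<Longrightarrow> \<exists>P. has_lead_mon a P"
  using in_span_finite_mons[of a] has_lead_mon_if_in_span_mons by blast

lemma independent_lead_mon_reps: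
  assumes "finite A" and w: "\<And>P. P \<in> A \<Longrightarrow> has_lead_mon (w P) P"
  shows "independent (w ` A)"
  using assms
proof (induction A rule: finite_linorder_max_induct)
  case empty
  then show ?case by (simp add: independent_empty)
next
  case (insert P A)
  have "w ` A \<subseteq> lower P"
    using insert.hyps(2) insert.prems has_lead_mon_in_lower by blast
  then have "span (w ` A) \<subseteq> lower P"
    unfolding lower_def by (rule span_minimal) simp
  moreover have "w P \<notin> lower P"
    using insert.prems has_lead_mon_notin_lower by blast
  ultimately have "w P \<notin> span (w ` A)" by blast
  then show ?case using insert independent_insertI by auto
qed

lemma span_lead_mon_reps:
  assumes "subspace W" and w: "\<And>P. P \<in> lead_mons W \<Longrightarrow> w P \<in> W \<and> has_lead_mon (w P) P"
  shows "W = span (w ` lead_mons W)"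
proof
  have reduce: "a \<in> span (w ` lead_mons W)" if "a \<in> W" "has_lead_mon a P" for a P
    using that
  proof (induction P arbitrary: a rule: less_induct)
    case (less P)
    have P: "P \<in> lead_mons W" using less.prems unfolding lead_mons_def by blast
    obtain k b where "b \<in> lower P" "a = scale k (mon P) + b"
      using less.prems(2) unfolding has_lead_mon_def by blast
    obtain k' b' where "k' \<noteq> 0" "b' \<in> lower P" "w P = scale k' (mon P) + b'"
      using w[OF P] unfolding has_lead_mon_def by blast
    define a' where "a' = a - scale (k / k') (w P)"
    have "a' \<in> W"
      unfolding a'_def using less.prems(1) w[OF P] \<open>subspace W\<close>
      by (intro subspace_diff subspace_scale) auto
    have "a' = b - scale (k / k') b'"
      unfolding a'_def \<open>a = _\<close> \<open>w P = _\<close> using \<open>k' \<noteq> 0\<close> by (simp add: scale_right_distrib)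
    then have "a' \<in> lower P"
      using \<open>b \<in> lower P\<close> \<open>b' \<in> lower P\<close> unfolding lower_def by (simp add: span_diff span_scale)
    have "a' \<in> span (w ` lead_mons W)"
    proof (cases "a' = 0")
      case True
      then show ?thesis by (simp add: span_zero)
    next
      case False
      then obtain Q where "has_lead_mon a' Q" using has_lead_mon_exists by blast
      moreover have "Q < P" using lead_mon_less_if_in_lower[OF \<open>a' \<in> lower P\<close>] calculation .
      ultimately show ?thesis using less.IH \<open>a' \<in> W\<close> by blast
    qed
    moreover have "scale (k / k') (w P) \<in> span (w ` lead_mons W)"
      using P by (intro span_scale span_base) auto
    ultimately have "a' + scale (k / k') (w P) \<in> span (w ` lead_mons W)" by (rule span_add)
    then show ?case unfolding a'_def by simp
  qed
  show "W \<subseteq> span (w ` lead_mons W)"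
    using reduce has_lead_mon_exists by (metis span_zero subsetI)
  show "span (w ` lead_mons W) \<subseteq> W"
    using w \<open>subspace W\<close> by (intro span_minimal) auto
qed

lemma dim_eq_card_lead_mons:
  assumes "fd_subspace scale W"
  shows "finite (lead_mons W)" "dim W = card (lead_mons W)"
proof -
  obtain B where "subspace W" "finite B" "W = span B"
    using assms unfolding fd_subspace_def by blast
  define w where "w P = (SOME a. a \<in> W \<and> has_lead_mon a P)" for P
  have w: "w P \<in> W \<and> has_lead_mon (w P) P" if "P \<in> lead_mons W" for P
    using that unfolding lead_mons_def w_def by (metis (mono_tags, lifting) mem_Collect_eq someI)
  have inj: "inj_on w (lead_mons W)"
    by (rule inj_onI) (metis w has_lead_mon_unique)
  show "finite (lead_mons W)"
  proof (rule ccontr)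
    assume "infinite (lead_mons W)"
    then obtain A where A: "finite A" "card A = Suc (card B)" "A \<subseteq> lead_mons W"
      using infinite_arbitrarily_large by blast
    have "independent (w ` A)"
      using A w by (intro independent_lead_mon_reps) auto
    moreover have "w ` A \<subseteq> span B" using w A(3) \<open>W = span B\<close> by auto
    ultimately have "card (w ` A) \<le> card B"
      using independent_span_bound[OF \<open>finite B\<close>] by simp
    moreover have "card (w ` A) = card A" using card_image inj_on_subset[OF inj A(3)] by blast
    ultimately show False using A(2) by simp
  qed
  then have "independent (w ` lead_mons W)"
    using w by (intro independent_lead_mon_reps) auto
  then have "dim W = card (w ` lead_mons W)"
    using span_lead_mon_reps[OF \<open>subspace W\<close> w] dim_span_eq_card_independent by metis
  then show "dim W = card (lead_mons W)" using card_image[OF inj] by simp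
qed

lemma x_mult_mon: "x * mon (j, i) = mon (j, Suc i)"
  unfolding mon_def by (simp add: mult.assoc)

lemma x_mult_lower: "b \<in> lower (j, i) \<Longrightarrow> x * b \<in> lower (j, Suc i)"
proof -
  assume "b \<in> lower (j, i)"
  then have "x * b \<in> span ((\<lambda>s. x * s) ` mon ` {Q. Q < (j, i)})"
    unfolding lower_def by (rule mult_left_in_span)
  also have "\<dots> \<subseteq> lower (j, Suc i)"
  proof (rule span_minimal)
    show "(\<lambda>s. x * s) ` mon ` {Q. Q < (j, i)} \<subseteq> lower (j, Suc i)"
      by (auto simp: x_mult_mon intro!: mon_in_lower)
  qed (simp add: lower_def)
  finally show ?thesis .
qed

lemma has_lead_mon_x_mult: "has_lead_mon a (j, i) \<Longrightarrow> has_lead_mon (x * a) (j, Suc i)"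
  unfolding has_lead_mon_def
proof (elim exE conjE)
  fix k b assume "k \<noteq> 0" "b \<in> lower (j, i)" "a = scale k (mon (j, i)) + b"
  then show "\<exists>k b. k \<noteq> 0 \<and> b \<in> lower (j, Suc i) \<and> x * a = scale k (mon (j, Suc i)) + b"
    by (intro exI[of _ k] exI[of _ "x * b"])
      (simp add: distrib_left scale_mult_right[symmetric] x_mult_mon x_mult_lower)
qed

lemma poly_emb_mult: "poly_emb scale x p * r = (\<Sum>l\<le>degree p. scale (coeff p l) (x ^ l * r))"
  unfolding poly_emb_def by (simp add: sum_distrib_right scale_mult_left)

lemma poly_emb_monom: "poly_emb scale x (monom 1 i) = x ^ i"
proof -
  have "poly_emb scale x (monom 1 i) = (\<Sum>l\<le>i. if l = i then x ^ l else 0)"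
    unfolding poly_emb_def degree_monom_eq[OF one_neq_zero] coeff_monom
    by (intro sum.cong) auto
  then show ?thesis by (simp add: sum.delta')
qed

lemma poly_emb_mult_y_pow_in_span:
  "poly_emb scale x p * y ^ j \<in> span (mon ` {(j, l) | l. l \<le> degree p})"
  unfolding poly_emb_mult x_pow_mult_y_pow by (intro span_sum span_scale span_base) auto

lemma poly_emb_mult_y_pow_lead:
  "poly_emb scale x p * y ^ j - scale (lead_coeff p) (mon (j, degree p))
     \<in> span (mon ` {(j, l) | l. l < degree p})"
proof -
  have "poly_emb scale x p * y ^ j = (\<Sum>l<Suc (degree p). scale (coeff p l) (x ^ l * y ^ j))"
    unfolding poly_emb_mult lessThan_Suc_atMost ..
  also have "\<dots> = (\<Sum>l<degree p. scale (coeff p l) (x ^ l * y ^ j))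
      + scale (lead_coeff p) (mon (j, degree p))"
    by (simp add: x_pow_mult_y_pow)
  finally have "poly_emb scale x p * y ^ j - scale (lead_coeff p) (mon (j, degree p))
      = (\<Sum>l<degree p. scale (coeff p l) (x ^ l * y ^ j))"
    by simp
  also have "\<dots> \<in> span (mon ` {(j, l) | l. l < degree p})"
    unfolding x_pow_mult_y_pow by (intro span_sum span_scale span_base) auto
  finally show ?thesis .
qed

definition lc_alpha_x :: complex where "lc_alpha_x = lead_coeff (\<alpha> [:0, 1:])"

lemma lc_alpha_x_nonzero: "lc_alpha_x \<noteq> 0"
proof -
  have "degree (\<alpha> [:0, 1:]) = 1" using degree_poly_alg_aut[OF aut, of "[:0, 1:]"] by simp
  then have "\<alpha> [:0, 1:] \<noteq> 0" by auto
  then show ?thesis unfolding lc_alpha_x_def by simp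
qed

lemma alpha_power: "\<alpha> (p ^ n) = \<alpha> p ^ n"
  using aut unfolding poly_alg_aut_def by (induction n) auto

lemma alpha_monom: "\<alpha> (monom 1 i) = \<alpha> [:0, 1:] ^ i"
  by (simp add: monom_altdef alpha_power)

lemma degree_alpha_monom: "degree (\<alpha> (monom 1 i)) = i"
  by (simp add: degree_poly_alg_aut[OF aut] degree_monom_eq)

lemma coeff_alpha_monom: "coeff (\<alpha> (monom 1 i)) i = lc_alpha_x ^ i"
  using degree_alpha_monom[of i] by (metis alpha_monom lead_coeff_power lc_alpha_x_def)

lemma y_mult_mon: "y * mon (j, i)
    = poly_emb scale x (\<alpha> (monom 1 i)) * y ^ Suc j + poly_emb scale x (\<delta> (monom 1 i)) * y ^ j"
proof -
  have "y * mon (j, i) = (y * poly_emb scale x (monom 1 i)) * y ^ j"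
    by (simp add: mon_def poly_emb_monom mult.assoc)
  then show ?thesis
    unfolding y_mult_poly by (simp add: distrib_right mult.assoc)
qed

lemma y_mult_mon_lead: "y * mon (j, i) - scale (lc_alpha_x ^ i) (mon (Suc j, i)) \<in> lower (Suc j, i)"
proof -
  let ?A = "poly_emb scale x (\<alpha> (monom 1 i)) * y ^ Suc j"
  let ?B = "poly_emb scale x (\<delta> (monom 1 i)) * y ^ j"
  have "?A - scale (lc_alpha_x ^ i) (mon (Suc j, i)) \<in> lower (Suc j, i)"
    using poly_emb_mult_y_pow_lead[of "\<alpha> (monom 1 i)" "Suc j"]
      span_mon_subset_lower[of "{(Suc j, l) | l. l < i}" "(Suc j, i)"]
    unfolding degree_alpha_monom coeff_alpha_monom by auto
  moreover have "?B \<in> lower (Suc j, i)"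
    using poly_emb_mult_y_pow_in_span[of "\<delta> (monom 1 i)" j]
      span_mon_subset_lower[of "{(j, l) | l. l \<le> degree (\<delta> (monom 1 i))}" "(Suc j, i)"]
    by auto
  moreover have "y * mon (j, i) - scale (lc_alpha_x ^ i) (mon (Suc j, i))
      = (?A - scale (lc_alpha_x ^ i) (mon (Suc j, i))) + ?B"
    unfolding y_mult_mon by (simp add: diff_add_eq)
  ultimately show ?thesis
    unfolding lower_def by (metis span_add)
qed

lemma y_mult_lower: "b \<in> lower (j, i) \<Longrightarrow> y * b \<in> lower (Suc j, i)"
proof -
  assume "b \<in> lower (j, i)"
  then have "y * b \<in> span ((\<lambda>s. y * s) ` mon ` {Q. Q < (j, i)})"
    unfolding lower_def by (rule mult_left_in_span)
  also have "\<dots> \<subseteq> lower (Suc j, i)"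
  proof (rule span_minimal)
    show "(\<lambda>s. y * s) ` mon ` {Q. Q < (j, i)} \<subseteq> lower (Suc j, i)"
    proof safe
      fix a b :: nat assume less: "(a, b) < (j, i)"
      have "y * mon (a, b) - scale (lc_alpha_x ^ b) (mon (Suc a, b)) \<in> lower (Suc j, i)"
        using y_mult_mon_lead[of a b] lower_mono[of "(Suc a, b)" "(Suc j, i)"] less by auto
      moreover have "scale (lc_alpha_x ^ b) (mon (Suc a, b)) \<in> lower (Suc j, i)"
        using mon_in_lower[of "(Suc a, b)" "(Suc j, i)"] less unfolding lower_def
        by (auto intro: span_scale)
      ultimately show "y * mon (a, b) \<in> lower (Suc j, i)"
        unfolding lower_def by (metis diff_add_cancel span_add)
    qed
  qed (simp add: lower_def)
  finally show ?thesis .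
qed

lemma has_lead_mon_y_mult:
  assumes "has_lead_mon a (j, i)"
  shows "has_lead_mon (y * a) (Suc j, i)"
proof -
  obtain k b where "k \<noteq> 0" "b \<in> lower (j, i)" and a: "a = scale k (mon (j, i)) + b"
    using assms unfolding has_lead_mon_def by blast
  define r where "r = y * mon (j, i) - scale (lc_alpha_x ^ i) (mon (Suc j, i))"
  have "y * a = scale (k * lc_alpha_x ^ i) (mon (Suc j, i)) + (scale k r + y * b)"
    unfolding a r_def by (simp add: distrib_left scale_mult_right[symmetric] scale_right_diff_distrib)
  moreover have "scale k r + y * b \<in> lower (Suc j, i)"
    using y_mult_mon_lead y_mult_lower[OF \<open>b \<in> lower (j, i)\<close>] unfolding r_def lower_def
    by (intro span_add span_scale)
  moreover have "k * lc_alpha_x ^ i \<noteq> 0" using \<open>k \<noteq> 0\<close> lc_alpha_x_nonzero by simp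
  ultimately show ?thesis unfolding has_lead_mon_def by blast
qed

definition frame_xy :: "'r set" where "frame_xy = span {1, x, y}"

lemma subframe_frame_xy: "subframe scale frame_xy"
  unfolding subframe_def fd_subspace_def frame_xy_def
  by (auto intro: span_base intro!: exI[of _ "{1, x, y}"])

lemma isoperimetric_frame_xy: "isoperimetric scale frame_xy 1 2"
  unfolding isoperimetric_def
proof (intro allI impI)
  fix W assume "fd_subspace scale W \<and> W \<noteq> {0}"
  then have W: "fd_subspace scale W" by simp
  let ?S = "lead_mons W"
  let ?U = "?S \<union> (\<lambda>(j, i). (j, Suc i)) ` ?S \<union> (\<lambda>(j, i). (Suc j, i)) ` ?S"
  have "fd_subspace scale (sprod scale frame_xy W)"
    using fd_subspace_sprod[OF _ W] subframe_frame_xy unfolding subframe_def by blast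
  moreover have "?U \<subseteq> lead_mons (sprod scale frame_xy W)"
  proof safe
    fix j i assume "(j, i) \<in> ?S"
    then obtain a where a: "a \<in> W" "has_lead_mon a (j, i)" unfolding lead_mons_def by blast
    have "1 \<in> frame_xy" "x \<in> frame_xy" "y \<in> frame_xy"
      unfolding frame_xy_def by (auto intro: span_base)
    then have "1 * a \<in> sprod scale frame_xy W" "x * a \<in> sprod scale frame_xy W"
      "y * a \<in> sprod scale frame_xy W"
      using a(1) mult_in_sprod by blast+
    then show "(j, i) \<in> lead_mons (sprod scale frame_xy W)"
      "(j, Suc i) \<in> lead_mons (sprod scale frame_xy W)"
      "(Suc j, i) \<in> lead_mons (sprod scale frame_xy W)"
      unfolding lead_mons_def using a(2) has_lead_mon_x_mult has_lead_mon_y_mult by fastforce+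
  qed
  ultimately have "card ?U \<le> dim (sprod scale frame_xy W)"
    using dim_eq_card_lead_mons by (simp add: card_mono)
  then show "real (dim W) + 1 * real (dim W) powr ((2 - 1) / 2) \<le> real (dim (sprod scale frame_xy W))"
    using card_add_sqrt_card_le_card_shifts[OF dim_eq_card_lead_mons(1)[OF W]]
    by (simp add: dim_eq_card_lead_mons(2)[OF W] powr_half_sqrt)
qed

section \<open>A weight filtration of the Ore extension\<close>

lemma delta_one: "\<delta> 1 = 0"
proof -
  have "\<delta> (1 * 1) = \<alpha> 1 * \<delta> 1 + \<delta> 1 * 1"
    using der unfolding alpha_derivation_def by blast
  then show ?thesis using aut unfolding poly_alg_aut_def by simp
qed

lemma degree_delta_monom: "degree (\<delta> (monom 1 i)) \<le> i + degree (\<delta> [:0, 1:])"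
proof (induction i)
  case 0
  then show ?case using delta_one by (simp add: monom_0 one_pCons[symmetric])
next
  case (Suc i)
  have "monom (1::complex) (Suc i) = [:0, 1:] * monom 1 i" by (simp add: monom_Suc)
  then have "\<delta> (monom 1 (Suc i)) = \<alpha> [:0, 1:] * \<delta> (monom 1 i) + \<delta> [:0, 1:] * monom 1 i"
    using der unfolding alpha_derivation_def by metis
  moreover have "degree (\<alpha> [:0, 1:] * \<delta> (monom 1 i)) \<le> Suc (i + degree (\<delta> [:0, 1:]))"
    using degree_mult_le[of "\<alpha> [:0, 1:]" "\<delta> (monom 1 i)"] degree_poly_alg_aut[OF aut, of "[:0, 1:]"]
      Suc.IH by simp
  moreover have "degree (\<delta> [:0, 1:] * monom 1 i) \<le> Suc (i + degree (\<delta> [:0, 1:]))"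
    using degree_mult_le[of "\<delta> [:0, 1:]" "monom 1 i"] by (simp add: degree_monom_eq)
  ultimately show ?case by (metis add_Suc degree_add_le)
qed

text \<open>Giving x weight 1 and y weight \<open>deg \<delta>(x) + 1\<close> defines an algebra filtration with
  finite-dimensional pieces of dimension \<open>O(n^2)\<close>: since \<open>deg \<delta>(x^i) \<le> i + deg \<delta>(x)\<close>,
  both terms of \<open>y x^i = \<alpha>(x)^i y + \<delta>(x^i)\<close> have weight at most that of \<open>x^i y\<close>.\<close>

definition y_weight :: nat where "y_weight = Suc (degree (\<delta> [:0, 1:]))"

definition filt :: "nat \<Rightarrow> 'r set" where
  "filt n = span (mon ` {P. snd P + y_weight * fst P \<le> n})"

lemma filt_mono: "n \<le> n' \<Longrightarrow> filt n \<subseteq> filt n'"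
  unfolding filt_def by (intro span_mono) auto

lemma mon_in_filt: "snd P + y_weight * fst P \<le> n \<Longrightarrow> mon P \<in> filt n"
  unfolding filt_def by (intro span_base) auto

lemma subspace_filt: "subspace (filt n)"
  unfolding filt_def by simp

lemma poly_emb_mult_y_pow_in_filt:
  assumes "degree p + y_weight * j \<le> n"
  shows "poly_emb scale x p * y ^ j \<in> filt n"
proof -
  have "span (mon ` {(j, l) | l. l \<le> degree p}) \<subseteq> filt n"
    unfolding filt_def using assms by (intro span_mono) auto
  then show ?thesis using poly_emb_mult_y_pow_in_span by blast
qed

lemma x_mult_filt: "z \<in> filt n \<Longrightarrow> x * z \<in> filt (Suc n)"
proof -
  assume "z \<in> filt n"
  then have "x * z \<in> span ((\<lambda>s. x * s) ` mon ` {P. snd P + y_weight * fst P \<le> n})"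
    unfolding filt_def by (rule mult_left_in_span)
  also have "\<dots> \<subseteq> filt (Suc n)"
    by (rule span_minimal[OF _ subspace_filt]) (auto simp: x_mult_mon intro!: mon_in_filt)
  finally show ?thesis .
qed

lemma y_mult_filt: "z \<in> filt n \<Longrightarrow> y * z \<in> filt (n + y_weight)"
proof -
  assume "z \<in> filt n"
  then have "y * z \<in> span ((\<lambda>s. y * s) ` mon ` {P. snd P + y_weight * fst P \<le> n})"
    unfolding filt_def by (rule mult_left_in_span)
  also have "\<dots> \<subseteq> filt (n + y_weight)"
  proof (rule span_minimal[OF _ subspace_filt], safe)
    fix j i assume weight: "snd (j, i) + y_weight * fst (j, i) \<le> n"
    have "poly_emb scale x (\<alpha> (monom 1 i)) * y ^ Suc j \<in> filt (n + y_weight)"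
      using weight by (intro poly_emb_mult_y_pow_in_filt) (simp add: degree_alpha_monom)
    moreover have "poly_emb scale x (\<delta> (monom 1 i)) * y ^ j \<in> filt (n + y_weight)"
      using weight degree_delta_monom[of i]
      by (intro poly_emb_mult_y_pow_in_filt) (simp add: y_weight_def)
    ultimately show "y * mon (j, i) \<in> filt (n + y_weight)"
      unfolding y_mult_mon by (rule subspace_add[OF subspace_filt])
  qed
  finally show ?thesis .
qed

lemma mult_filt: "v \<in> filt a \<Longrightarrow> w \<in> filt b \<Longrightarrow> v * w \<in> filt (a + b)"
proof -
  assume v: "v \<in> filt a" and w: "w \<in> filt b"
  have x_pow: "x ^ i * z \<in> filt (n + i)" if "z \<in> filt n" for i n z
    using that by (induction i) (auto simp: mult.assoc dest: x_mult_filt)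
  have y_pow: "y ^ j * z \<in> filt (n + y_weight * j)" if "z \<in> filt n" for j n z
  proof (induction j)
    case (Suc j)
    then have "y * (y ^ j * z) \<in> filt (n + y_weight * j + y_weight)" by (rule y_mult_filt)
    then show ?case by (simp add: mult.assoc algebra_simps)
  qed (simp add: that)
  have "v * w \<in> span ((\<lambda>s. s * w) ` mon ` {P. snd P + y_weight * fst P \<le> a})"
    using v unfolding filt_def by (rule mult_right_in_span)
  also have "\<dots> \<subseteq> filt (a + b)"
  proof (rule span_minimal[OF _ subspace_filt], safe)
    fix j i assume weight: "snd (j, i) + y_weight * fst (j, i) \<le> a"
    have "mon (j, i) * w = x ^ i * (y ^ j * w)" by (simp add: mon_def mult.assoc)
    also have "\<dots> \<in> filt (b + y_weight * j + i)" by (intro x_pow y_pow w)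
    also have "\<dots> \<subseteq> filt (a + b)" using weight by (intro filt_mono) simp
    finally show "mon (j, i) * w \<in> filt (a + b)" .
  qed
  finally show ?thesis .
qed

lemma in_some_filt: "\<exists>n. a \<in> filt n"
proof -
  obtain S where S: "finite S" "a \<in> span (mon ` S)" using in_span_finite_mons by blast
  define n where "n = (\<Sum>P\<in>S. snd P + y_weight * fst P)"
  have "mon ` S \<subseteq> filt n"
  proof safe
    fix P assume "P \<in> S"
    then show "mon P \<in> filt n"
      unfolding n_def by (intro mon_in_filt member_le_sum[OF _ _ S(1)]) auto
  qed
  then show ?thesis using S(2) span_minimal[OF _ subspace_filt] by blast
qed

lemma fd_subspace_subset_filt:
  assumes "fd_subspace scale V"
  shows "\<exists>n. V \<subseteq> filt n"
proof -
  obtain B where "finite B" "V = span B" using assms unfolding fd_subspace_def by blast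
  have "\<exists>n. B \<subseteq> filt n"
    using \<open>finite B\<close>
  proof (induction B rule: finite_induct)
    case (insert b B)
    obtain n n' where "B \<subseteq> filt n" "b \<in> filt n'" using insert.IH in_some_filt by blast
    then have "insert b B \<subseteq> filt (n + n')" using filt_mono[of n "n + n'"] filt_mono[of n' "n + n'"] by auto
    then show ?case by blast
  qed simp
  then show ?thesis using \<open>V = span B\<close> span_minimal[OF _ subspace_filt] by blast
qed

lemma dim_filt_le: "V \<subseteq> filt n \<Longrightarrow> dim V \<le> (n + 1) ^ 2"
proof -
  assume "V \<subseteq> filt n"
  have weights: "{P. snd P + y_weight * fst P \<le> n} \<subseteq> {..n} \<times> {..n}"
    unfolding y_weight_def by auto
  have finite: "finite {P. snd P + y_weight * fst P \<le> n}" using finite_subset[OF weights] by blast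
  then have "dim V \<le> card (mon ` {P. snd P + y_weight * fst P \<le> n})"
    using \<open>V \<subseteq> filt n\<close> unfolding filt_def by (intro dim_le_card) auto
  also have "\<dots> \<le> card {P. snd P + y_weight * fst P \<le> n}"
    using finite by (rule card_image_le)
  also have "\<dots> \<le> card ({..n} \<times> {..n})"
    using weights by (intro card_mono) auto
  also have "\<dots> = (n + 1) ^ 2" by (simp add: card_cartesian_product power2_eq_square)
  finally show ?thesis .
qed

lemma spow_subset_filt: "V \<subseteq> filt n \<Longrightarrow> spow scale V m \<subseteq> filt (n * m)"
proof (induction m)
  case 0
  have "1 \<in> filt 0" using mon_in_filt[of "(0, 0)" 0] by (simp add: mon_def)
  then show ?case by (simp add: span_minimal[OF _ subspace_filt])
next
  case (Suc m)
  have "sprod scale V (spow scale V m) \<subseteq> filt (n + n * m)"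
    using Suc by (intro sprod_subset[OF subspace_filt]) (auto intro: mult_filt)
  then show ?case by simp
qed

lemma spow_growth_le:
  assumes "subframe scale V"
  shows "\<exists>A>0. \<forall>m\<ge>1. real (dim (spow scale V m)) \<le> A * real m powr 2"
proof -
  obtain n where "V \<subseteq> filt n"
    using assms fd_subspace_subset_filt unfolding subframe_def by blast
  have "real (dim (spow scale V m)) \<le> real (n + 1) ^ 2 * real m powr 2" if "m \<ge> 1" for m
  proof -
    have "dim (spow scale V m) \<le> (n * m + 1) ^ 2"
      by (intro dim_filt_le spow_subset_filt \<open>V \<subseteq> filt n\<close>)
    also have "\<dots> \<le> ((n + 1) * m) ^ 2"
      using that by (intro power_mono) (auto simp: algebra_simps)
    finally have "real (dim (spow scale V m)) \<le> real (((n + 1) * m) ^ 2)"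
      by (simp only: of_nat_le_iff)
    also have "\<dots> = real (n + 1) ^ 2 * real m powr 2"
      by (simp only: of_nat_power of_nat_mult power_mult_distrib powr_numeral of_nat_0_le_iff)
    finally show ?thesis .
  qed
  then show ?thesis by (intro exI[of _ "real (n + 1) ^ 2"]) auto
qed

lemma GKdim_eq_2: "GKdim scale = 2"
proof (rule antisym)
  show "GKdim scale \<le> 2"
    using GKdim_le[of 2] spow_growth_le by simp
  obtain \<kappa> where "\<kappa> > 0" "\<forall>m. (\<kappa> * real m) powr 2 \<le> real (dim (spow scale frame_xy m))"
    using spow_growth_if_isoperimetric[OF subframe_frame_xy _ _ isoperimetric_frame_xy] by auto
  then show "2 \<le> GKdim scale"
    using GKdim_ge[OF subframe_frame_xy, of \<kappa> 2] by simp
qed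

lemma LDdim_eq_2: "LDdim scale = 2"
proof (rule antisym)
  show "LDdim scale \<le> 2"
    using LDdim_le[of 2] spow_growth_le by simp
  show "2 \<le> LDdim scale"
    using LDdim_ge[OF subframe_frame_xy _ _ isoperimetric_frame_xy] by simp
qed

end

theorem proposition5p10:
  fixes scale :: "complex \<Rightarrow> 'r::ring_1 \<Rightarrow> 'r"
    and x y :: 'r
    and \<alpha> \<delta> :: "complex poly \<Rightarrow> complex poly"
    and \<iota> :: "'r \<Rightarrow> 'q::division_ring"
  assumes "poly_alg_aut \<alpha>"
    and "alpha_derivation \<alpha> \<delta>"
    and "is_ore_extension scale x y \<alpha> \<delta>"
    and "is_division_ring_of_fractions \<iota>"
    and "{z. ring_center z} = range (\<lambda>c. \<iota> (scale c 1))"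
  shows "(LD_stable scale \<and> LDdim scale = 2) \<longleftrightarrow> locally_algebraic \<alpha>"
proof -
  interpret ore_extension scale x y \<alpha> \<delta>
    using assms(1-3)
    unfolding ore_extension_def ore_extension_axioms_def complex_alg_def complex_alg_axioms_def
      is_ore_extension_def complex_algebra_def
    by blast
  have "LD_stable scale \<and> LDdim scale = 2"
    using LDdim_eq_2 GKdim_eq_2 unfolding LD_stable_def by simp
  moreover have "locally_algebraic \<alpha>"
    using degree_poly_alg_aut[OF assms(1)] by (intro locally_algebraic_if_degree_le) simp
  ultimately show ?thesis by simp
qed

end
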